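(* Let $|\psi_{ABC}\rangle\in\mathbb{C}^2\otimes\mathbb{C}^2\otimes\mathbb{C}^d$ be a pure state that is entangled with respect to the bipartition $AB|C$. Then there exist projective measurements $\{P_{a|0}\}_{a=0}^1,\{P_{a|1}\}_{a=0}^1$ on subsystem $A$ and $\{Q_{b|0}\}_{b=0}^1,\{Q_{b|1}\}_{b=0}^1$ on subsystem $B$ such that the assemblage $\Sigma=\{\sigma_{ab|xy}\}$, $\sigma_{ab|xy}=\mathrm{Tr}_{AB}\big((P_{a|x}\otimes Q_{b|y}\otimes\mathbb{1})|\psi_{ABC}\rangle\langle\psi_{ABC}|\big)$ ($a,b,x,y\in\{0,1\}$), is on the edge of the set of no-signaling assemblages.
   Context: Scenario with two untrusted parties, binary outcomes $a,b\in\{0,1\}$ and binary settings $x,y\in\{0,1\}$, trusted system $\mathbb{C}^d$. A no-signaling assemblage is a collection of positive semidefinite operators $\sigma_{ab|xy}$ on $\mathbb{C}^d$ with $\sum_{a,b}\sigma_{ab|xy}=\rho$ independent of $x,y$ and of trace one, $\sum_b\sigma_{ab|xy}$ independent of $y$, and $\sum_a\sigma_{ab|xy}$ independent of $x$. An LHS assemblage is one of the form $\sigma_{ab|xy}=\sum_j q_j p_j(a|x)p'_j(b|y)\rho_j$ with probability weights $q_j$, density operators $\rho_j$ and conditional probability distributions $p_j,p'_j$. A no-signaling assemblage $\Sigma$ is on the edge if whenever $\Sigma=\epsilon\Sigma_1+(1-\epsilon)\Sigma_2$ with $\epsilon\in[0,1]$, $\Sigma_1$ LHS and $\Sigma_2$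 no-signaling, necessarily $\epsilon=0$. *)

theory Defs
  imports Complex_Main
begin

text \<open>A vector in C^n is a function nat => complex (entries i < n relevant);
an operator on C^n is a function nat => nat => complex (entries i,j < n relevant).
A tripartite pure state in C^2 (x) C^2 (x) C^d is psi a b c with a,b < 2, c < d.
An assemblage is a function S a b x y i j giving entry (i,j) of sigma_{ab|xy}.\<close>

definition psd :: "nat \<Rightarrow> (nat \<Rightarrow> nat \<Rightarrow> complex) \<Rightarrow> bool" where
  "psd n M \<longleftrightarrow> (\<forall>v :: nat \<Rightarrow> complex.
     (\<Sum>i<n. \<Sum>j<n. cnj (v i) * M i j * v j) \<in> \<real> \<and>
     0 \<le> Re (\<Sum>i<n. \<Sum>j<n. cnj (v i) * M i j * v j))"

definition trace_op :: "nat \<Rightarrow> (nat \<Rightarrow> nat \<Rightarrow> complex) \<Rightarrow> complex" where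
  "trace_op n M = (\<Sum>i<n. M i i)"

definition density_op :: "nat \<Rightarrow> (nat \<Rightarrow> nat \<Rightarrow> complex) \<Rightarrow> bool" where
  "density_op n M \<longleftrightarrow> psd n M \<and> trace_op n M = 1"

definition projector :: "nat \<Rightarrow> (nat \<Rightarrow> nat \<Rightarrow> complex) \<Rightarrow> bool" where
  "projector n P \<longleftrightarrow> (\<forall>i<n. \<forall>j<n. P i j = cnj (P j i)) \<and>
     (\<forall>i<n. \<forall>j<n. (\<Sum>k<n. P i k * P k j) = P i j)"

definition proj_meas2 :: "(nat \<Rightarrow> nat \<Rightarrow> nat \<Rightarrow> complex) \<Rightarrow> bool" where
  "proj_meas2 P \<longleftrightarrow> projector 2 (P 0) \<and> projector 2 (P 1) \<and>
     (\<forall>i<2. \<forall>j<2. P 0 i j + P 1 i j = (if i = j then 1 else 0))"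

definition pure_state :: "nat \<Rightarrow> (nat \<Rightarrow> nat \<Rightarrow> nat \<Rightarrow> complex) \<Rightarrow> bool" where
  "pure_state d psi \<longleftrightarrow> (\<Sum>a<2. \<Sum>b<2. \<Sum>c<d. (cmod (psi a b c))\<^sup>2) = 1"

definition product_AB_C :: "nat \<Rightarrow> (nat \<Rightarrow> nat \<Rightarrow> nat \<Rightarrow> complex) \<Rightarrow> bool" where
  "product_AB_C d psi \<longleftrightarrow> (\<exists>(phi :: nat \<Rightarrow> nat \<Rightarrow> complex) (chi :: nat \<Rightarrow> complex).
     \<forall>a<2. \<forall>b<2. \<forall>c<d. psi a b c = phi a b * chi c)"

definition entangled_AB_C :: "nat \<Rightarrow> (nat \<Rightarrow> nat \<Rightarrow> nat \<Rightarrow> complex) \<Rightarrow> bool" where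
  "entangled_AB_C d psi \<longleftrightarrow> \<not> product_AB_C d psi"

type_synonym assemblage = "nat \<Rightarrow> nat \<Rightarrow> nat \<Rightarrow> nat \<Rightarrow> nat \<Rightarrow> nat \<Rightarrow> complex"

definition no_signaling :: "nat \<Rightarrow> assemblage \<Rightarrow> bool" where
  "no_signaling d S \<longleftrightarrow>
     (\<forall>a<2. \<forall>b<2. \<forall>x<2. \<forall>y<2. psd d (S a b x y)) \<and>
     (\<exists>rho. trace_op d rho = 1 \<and>
        (\<forall>x<2. \<forall>y<2. \<forall>i<d. \<forall>j<d. (\<Sum>a<2. \<Sum>b<2. S a b x y i j) = rho i j)) \<and>
     (\<forall>a<2. \<forall>x<2. \<forall>i<d. \<forall>j<d. (\<Sum>b<2. S a b x 0 i j) = (\<Sum>b<2. S a b x 1 i j)) \<and>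
     (\<forall>b<2. \<forall>y<2. \<forall>i<d. \<forall>j<d. (\<Sum>a<2. S a b 0 y i j) = (\<Sum>a<2. S a b 1 y i j))"

definition cond_prob :: "(nat \<Rightarrow> nat \<Rightarrow> real) \<Rightarrow> bool" where
  "cond_prob p \<longleftrightarrow> (\<forall>a<2. \<forall>x<2. 0 \<le> p a x) \<and> (\<forall>x<2. (\<Sum>a<2. p a x) = 1)"

definition LHS :: "nat \<Rightarrow> assemblage \<Rightarrow> bool" where
  "LHS d S \<longleftrightarrow> (\<exists>(n::nat) (q :: nat \<Rightarrow> real) (p :: nat \<Rightarrow> nat \<Rightarrow> nat \<Rightarrow> real)
       (p' :: nat \<Rightarrow> nat \<Rightarrow> nat \<Rightarrow> real) (rho :: nat \<Rightarrow> nat \<Rightarrow> nat \<Rightarrow> complex).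
     (\<forall>k<n. 0 \<le> q k) \<and> (\<Sum>k<n. q k) = 1 \<and>
     (\<forall>k<n. cond_prob (p k) \<and> cond_prob (p' k) \<and> density_op d (rho k)) \<and>
     (\<forall>a<2. \<forall>b<2. \<forall>x<2. \<forall>y<2. \<forall>i<d. \<forall>j<d.
        S a b x y i j = (\<Sum>k<n. complex_of_real (q k * p k a x * p' k b y) * rho k i j)))"

definition on_edge :: "nat \<Rightarrow> assemblage \<Rightarrow> bool" where
  "on_edge d S \<longleftrightarrow> no_signaling d S \<and>
     (\<forall>(\<epsilon>::real) S1 S2. 0 \<le> \<epsilon> \<and> \<epsilon> \<le> 1 \<and> LHS d S1 \<and> no_signaling d S2 \<and>
        (\<forall>a<2. \<forall>b<2. \<forall>x<2. \<forall>y<2. \<forall>i<d. \<forall>j<d.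
           S a b x y i j = complex_of_real \<epsilon> * S1 a b x y i j
                           + complex_of_real (1 - \<epsilon>) * S2 a b x y i j)
        \<longrightarrow> \<epsilon> = 0)"

text \<open>sigma_{ab|xy} = Tr_AB((P_{a|x} (x) Q_{b|y} (x) 1) |psi><psi|), entry (c,c').
  P x a is the 2x2 matrix P_{a|x}.\<close>
definition induced_assemblage ::
  "nat \<Rightarrow> (nat \<Rightarrow> nat \<Rightarrow> nat \<Rightarrow> complex) \<Rightarrow> (nat \<Rightarrow> nat \<Rightarrow> nat \<Rightarrow> nat \<Rightarrow> complex)
     \<Rightarrow> (nat \<Rightarrow> nat \<Rightarrow> nat \<Rightarrow> nat \<Rightarrow> complex) \<Rightarrow> assemblage" where
  "induced_assemblage d psi P Q a b x y c c' =
     (\<Sum>i<2. \<Sum>i'<2. \<Sum>j<2. \<Sum>j'<2.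
        P x a i' i * Q y b j' j * psi i j c * cnj (psi i' j' c'))"

end

theory Submission
  imports Defs
begin

text \<open>
  Alice and Bob both measure in the eigenbases of Z (setting 0) and X (setting 1). Every element
  of the resulting assemblage is then rank one: \<sigma>_ab|xy is proportional to |v\<rangle>\<langle>v| for the
  unnormalised conditional state v = (\<langle>m_a|x| \<otimes> \<langle>m_b|y| \<otimes> 1) \<psi> of C.
  Suppose \<Sigma> = \<epsilon> \<Sigma>_LHS + (1 - \<epsilon>) \<Sigma>' with \<epsilon> > 0. Choose a hidden state \<rho>_k of positive
  weight and, for each setting, an outcome a(x), b(y) to which it gives positive probability.
  Then \<rho>_k is dominated by each \<sigma>_a(x)b(y)|xy, so its support lies on every line spanned by
  the four vectors v_a(x)b(y)|xy, which are therefore all multiples of one vector \<chi>. Since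
  m_a(0)|0 and m_a(1)|1 form a basis of C^2, and similarly for Bob, this makes \<psi> a product
  \<phi> \<otimes> \<chi> across AB|C.
\<close>

lemma sum_lessThan_2: "(\<Sum>i<(2::nat). f i) = f 0 + f 1"
  by (simp add: numeral_2_eq_2)

lemma all_less_2: "(\<forall>i<(2::nat). P i) \<longleftrightarrow> P 0 \<and> P 1"
  by (auto simp: numeral_2_eq_2 less_Suc_eq)

lemma ex_pos_if_sum_eq_1:
  fixes f :: "'a \<Rightarrow> real"
  assumes "sum f A = 1"
  shows "\<exists>k\<in>A. 0 < f k"
proof (rule ccontr)
  assume "\<not> ?thesis"
  then have "sum f A \<le> 0" by (intro sum_nonpos) (simp add: not_less)
  with assms show False by simp
qed

lemma linear_coeff_eq_0_if_nonneg:
  fixes r q :: real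
  assumes "\<And>s. 0 \<le> s * r + s\<^sup>2 * q"
  shows "r = 0"
proof -
  define a where "a = \<bar>q\<bar> + 1"
  have "a > 0" and "\<bar>q\<bar> = a - 1" unfolding a_def by simp_all
  have "0 \<le> (- r / a) * r + (- r / a)\<^sup>2 * \<bar>q\<bar>"
    using assms[of "- r / a"] by (smt (verit) abs_ge_self mult_left_mono zero_le_power2)
  also have "\<dots> = - r\<^sup>2 / a\<^sup>2"
    using \<open>a > 0\<close> by (simp add: \<open>\<bar>q\<bar> = a - 1\<close> field_simps power2_eq_square)
  finally have "r\<^sup>2 \<le> 0"
    using \<open>a > 0\<close> by (simp add: divide_le_0_iff)
  then show "r = 0" by simp
qed

definition sesq_form ::
    "nat \<Rightarrow> (nat \<Rightarrow> nat \<Rightarrow> complex) \<Rightarrow> (nat \<Rightarrow> complex) \<Rightarrow> (nat \<Rightarrow> complex) \<Rightarrow> complex" where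
  "sesq_form n M w z = (\<Sum>i<n. \<Sum>j<n. cnj (w i) * M i j * z j)"

abbreviation qform :: "nat \<Rightarrow> (nat \<Rightarrow> nat \<Rightarrow> complex) \<Rightarrow> (nat \<Rightarrow> complex) \<Rightarrow> complex" where
  "qform n M w \<equiv> sesq_form n M w w"

lemma psd_iff_qform: "psd n M \<longleftrightarrow> (\<forall>w. qform n M w \<in> \<real> \<and> 0 \<le> Re (qform n M w))"
  by (simp add: psd_def sesq_form_def)

lemma qform_add_scaled:
  "qform n M (\<lambda>i. w i + t * z i) =
     qform n M w + t * sesq_form n M w z + cnj t * sesq_form n M z w + cnj t * t * qform n M z"
  unfolding sesq_form_def by (simp add: algebra_simps sum.distrib sum_distrib_left)

lemma eq_0_if_nonneg_along_real_line:
  fixes u q :: complex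
  assumes nonneg: "\<And>s::real. of_real s * u + of_real (s\<^sup>2) * q \<in> \<real> \<and>
      0 \<le> Re (of_real s * u + of_real (s\<^sup>2) * q)"
    and "q \<in> \<real>"
  shows "u = 0"
proof -
  have "u + q \<in> \<real>" using nonneg[of 1] by simp
  with \<open>q \<in> \<real>\<close> have "Im u = 0"
    by (metis Reals_diff add_diff_cancel_right' complex_is_Real_iff)
  moreover have "Re u = 0"
    by (rule linear_coeff_eq_0_if_nonneg[of _ "Re q"]) (use nonneg in simp)
  ultimately show "u = 0" by (simp add: complex_eq_iff)
qed

lemma psd_sesq_form_eq_0:
  assumes psd: "psd n M" and "qform n M w = 0"
  shows "sesq_form n M w z = 0"
proof -
  define X Y where "X = sesq_form n M w z" and "Y = sesq_form n M z w"
  have q_real: "qform n M z \<in> \<real>" using psd by (simp add: psd_iff_qform)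
  have "X + Y = 0"
  proof (rule eq_0_if_nonneg_along_real_line[OF _ q_real])
    fix s :: real
    have "qform n M (\<lambda>i. w i + of_real s * z i) = of_real s * (X + Y) + of_real (s\<^sup>2) * qform n M z"
      unfolding qform_add_scaled X_def Y_def \<open>qform n M w = 0\<close>
      by (simp add: algebra_simps power2_eq_square)
    then show "of_real s * (X + Y) + of_real (s\<^sup>2) * qform n M z \<in> \<real> \<and>
        0 \<le> Re (of_real s * (X + Y) + of_real (s\<^sup>2) * qform n M z)"
      using psd by (metis psd_iff_qform)
  qed
  moreover have "\<i> * (X - Y) = 0"
  proof (rule eq_0_if_nonneg_along_real_line[OF _ q_real])
    fix s :: real
    have "qform n M (\<lambda>i. w i + \<i> * of_real s * z i) = of_real s * (\<i> * (X - Y)) + of_real (s\<^sup>2) * qform n M z"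
      unfolding qform_add_scaled X_def Y_def \<open>qform n M w = 0\<close>
      by (simp add: algebra_simps power2_eq_square)
    then show "of_real s * (\<i> * (X - Y)) + of_real (s\<^sup>2) * qform n M z \<in> \<real> \<and>
        0 \<le> Re (of_real s * (\<i> * (X - Y)) + of_real (s\<^sup>2) * qform n M z)"
      using psd by (metis psd_iff_qform)
  qed
  ultimately show ?thesis unfolding X_def by (simp add: algebra_simps)
qed

lemma sesq_form_basis_right:
  "c0 < n \<Longrightarrow> sesq_form n M w (\<lambda>j. if j = c0 then 1 else 0) = (\<Sum>i<n. cnj (w i) * M i c0)"
  unfolding sesq_form_def by (intro sum.cong refl) (simp add: if_distrib[of "\<lambda>u. _ * u"] cong: if_cong)

lemma psd_column_parallel:
  assumes psd: "psd n M"
    and kernel: "\<And>w. (\<Sum>c<n. cnj (w c) * v c) = 0 \<Longrightarrow> qform n M w = 0"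
    and "i < n" "j < n" "c0 < n"
  shows "v j * M i c0 = v i * M j c0"
proof -
  define w where "w c = (if c = i then cnj (v j) else 0) - (if c = j then cnj (v i) else 0)" for c
  have pair: "(\<Sum>c<n. cnj (w c) * f c) = v j * f i - v i * f j" for f
  proof -
    have "cnj (w c) * f c = (if c = i then v j * f i else 0) - (if c = j then v i * f j else 0)" for c
      by (simp add: w_def left_diff_distrib)
    then show ?thesis using \<open>i < n\<close> \<open>j < n\<close> by (simp add: sum_subtractf)
  qed
  have "sesq_form n M w (\<lambda>c. if c = c0 then 1 else 0) = 0"
    by (rule psd_sesq_form_eq_0[OF psd], rule kernel) (simp add: pair)
  then show ?thesis
    using \<open>c0 < n\<close> by (simp add: sesq_form_basis_right pair)
qed

lemma qform_rank_one:
  "qform n (\<lambda>i j. v i * cnj (v j) / of_real r) w = of_real ((cmod (\<Sum>i<n. cnj (w i) * v i))\<^sup>2 / r)"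
proof -
  define z where "z = (\<Sum>i<n. cnj (w i) * v i)"
  have "qform n (\<lambda>i j. v i * cnj (v j) / of_real r) w = z * cnj z / of_real r"
    unfolding sesq_form_def z_def
    by (simp add: sum_distrib_left sum_distrib_right sum_divide_distrib mult_ac) (rule sum.swap)
  also have "\<dots> = of_real ((cmod z)\<^sup>2 / r)"
    using complex_norm_square[of z] by simp
  finally show ?thesis unfolding z_def .
qed

lemma psd_rank_one: "0 \<le> r \<Longrightarrow> psd n (\<lambda>i j. v i * cnj (v j) / of_real r)"
  by (simp add: psd_iff_qform qform_rank_one)

lemma sesq_form_cong:
  "(\<And>i j. i < n \<Longrightarrow> j < n \<Longrightarrow> M i j = N i j) \<Longrightarrow> sesq_form n M w z = sesq_form n N w z"
  unfolding sesq_form_def by (intro sum.cong refl) simp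

lemma sesq_form_sum:
  "sesq_form n (\<lambda>i j. \<Sum>k\<in>K. c k * M k i j) w z = (\<Sum>k\<in>K. c k * sesq_form n (M k) w z)"
  unfolding sesq_form_def
  by (simp add: sum_distrib_left sum_distrib_right mult_ac sum.swap[of _ K])

lemma sesq_form_add:
  "sesq_form n (\<lambda>i j. M i j + N i j) w z = sesq_form n M w z + sesq_form n N w z"
  unfolding sesq_form_def by (simp add: algebra_simps sum.distrib)

lemma sesq_form_scale: "sesq_form n (\<lambda>i j. a * M i j) w z = a * sesq_form n M w z"
  unfolding sesq_form_def by (simp add: sum_distrib_left mult_ac)

lemma psd_qform_eq_0_iff_Re: "psd n M \<Longrightarrow> qform n M w = 0 \<longleftrightarrow> Re (qform n M w) = 0"
  by (metis Re_complex_of_real Reals_cases of_real_0 psd_iff_qform zero_complex.sel(1))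

lemma qform_psd_mixture_eq_0:
  fixes c :: "nat \<Rightarrow> real"
  assumes mix: "\<And>i j. i < d \<Longrightarrow> j < d \<Longrightarrow>
      S i j = of_real e * (\<Sum>k<n. of_real (c k) * M k i j) + of_real (1 - e) * N i j"
    and comps: "\<And>k. k < n \<Longrightarrow> 0 \<le> c k \<and> psd d (M k)"
    and "psd d N" and "0 < e" "e \<le> 1"
    and "qform d S w = 0" and "k < n" "0 < c k"
  shows "qform d (M k) w = 0"
proof -
  have nonneg: "0 \<le> c l * Re (qform d (M l) w)" if "l \<in> {..<n}" for l
    using comps[of l] that by (simp add: psd_iff_qform)
  have "qform d S w =
      qform d (\<lambda>i j. of_real e * (\<Sum>k<n. of_real (c k) * M k i j) + of_real (1 - e) * N i j) w"
    by (rule sesq_form_cong) (rule mix)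
  also have "\<dots> = of_real e * (\<Sum>k<n. of_real (c k) * qform d (M k) w) + of_real (1 - e) * qform d N w"
    by (simp only: sesq_form_add sesq_form_scale sesq_form_sum)
  finally have "Re (qform d S w) = e * (\<Sum>l<n. c l * Re (qform d (M l) w)) + (1 - e) * Re (qform d N w)"
    by (simp add: Re_sum)
  with \<open>qform d S w = 0\<close>
  have "0 = e * (\<Sum>l<n. c l * Re (qform d (M l) w)) + (1 - e) * Re (qform d N w)"
    by simp
  moreover have "0 \<le> (\<Sum>l<n. c l * Re (qform d (M l) w))"
    using nonneg by (rule sum_nonneg)
  moreover have "0 \<le> (1 - e) * Re (qform d N w)"
    using \<open>psd d N\<close> \<open>e \<le> 1\<close> by (simp add: psd_iff_qform)
  ultimately have "e * (\<Sum>l<n. c l * Re (qform d (M l) w)) = 0"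
    using \<open>0 < e\<close> by (smt (verit) mult_nonneg_nonneg)
  then have "(\<Sum>l<n. c l * Re (qform d (M l) w)) = 0"
    using \<open>0 < e\<close> by simp
  then have "c k * Re (qform d (M k) w) = 0"
    using sum_nonneg_eq_0_iff[OF finite_lessThan nonneg] \<open>k < n\<close> by simp
  then have "Re (qform d (M k) w) = 0"
    using \<open>0 < c k\<close> by simp
  then show ?thesis
    using psd_qform_eq_0_iff_Re comps[OF \<open>k < n\<close>] by blast
qed

lemma rows_parallel_if_independent:
  fixes m0 m1 :: "nat \<Rightarrow> complex"
  assumes det: "m0 0 * m1 1 - m0 1 * m1 0 \<noteq> 0"
    and h0: "\<forall>c<d. (\<Sum>i<2. m0 i * h i c) = t0 * \<chi> c"
    and h1: "\<forall>c<d. (\<Sum>i<2. m1 i * h i c) = t1 * \<chi> c"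
  shows "\<exists>r. \<forall>i<2. \<forall>c<d. h i c = r i * \<chi> c"
proof -
  define D where "D = m0 0 * m1 1 - m0 1 * m1 0"
  \<comment> \<open>Cramer's rule for the 2 x 2 system with rows m0, m1.\<close>
  have "D * h 0 c = (m1 1 * t0 - m0 1 * t1) * \<chi> c \<and> D * h 1 c = (m0 0 * t1 - m1 0 * t0) * \<chi> c"
    if "c < d" for c
  proof -
    have "D * h 0 c = m1 1 * (\<Sum>i<2. m0 i * h i c) - m0 1 * (\<Sum>i<2. m1 i * h i c)"
      and "D * h 1 c = m0 0 * (\<Sum>i<2. m1 i * h i c) - m1 0 * (\<Sum>i<2. m0 i * h i c)"
      by (simp_all add: D_def sum_lessThan_2 algebra_simps)
    then show ?thesis
      using h0 h1 that by (simp add: algebra_simps)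
  qed
  then show ?thesis
    using det unfolding D_def[symmetric]
    by (intro exI[of _ "\<lambda>i. if i = 0 then (m1 1 * t0 - m0 1 * t1) / D else (m0 0 * t1 - m1 0 * t0) / D"])
      (auto simp: all_less_2 field_simps)
qed

lemma cond_prob_ex_pos:
  assumes "cond_prob p" "x < 2"
  shows "\<exists>a<2. 0 < p a x"
proof -
  have "(\<Sum>a<2. p a x) = 1"
    using assms unfolding cond_prob_def by blast
  then show ?thesis
    using ex_pos_if_sum_eq_1 by fastforce
qed

lemma density_op_ex_diag_nonzero:
  assumes "density_op d \<rho>"
  shows "\<exists>c<d. \<rho> c c \<noteq> 0"
proof (rule ccontr)
  assume "\<not> ?thesis"
  then have "trace_op d \<rho> = 0"
    by (simp add: trace_op_def)
  with assms show False
    by (simp add: density_op_def)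
qed

lemma proj_meas2_sum_outcomes:
  "proj_meas2 P \<Longrightarrow> i < 2 \<Longrightarrow> j < 2 \<Longrightarrow> (\<Sum>a<2. P a i j) = (if i = j then 1 else 0)"
  by (simp add: proj_meas2_def sum_lessThan_2)

lemma induced_assemblage_sum_outcomes_B:
  assumes "proj_meas2 (Q y)"
  shows "(\<Sum>b<2. induced_assemblage d psi P Q a b x y c c') =
    (\<Sum>i<2. \<Sum>i'<2. \<Sum>j<2. P x a i' i * psi i j c * cnj (psi i' j c'))"
proof -
  have complete: "(\<Sum>b<2. Q y b j' j) = (if j' = j then 1 else 0)" if "j' < 2" "j < 2" for j' j
    using proj_meas2_sum_outcomes[OF assms that] .
  have "(\<Sum>b<2. induced_assemblage d psi P Q a b x y c c') =
    (\<Sum>i<2. \<Sum>i'<2. \<Sum>j<2. \<Sum>j'<2. (\<Sum>b<2. Q y b j' j) * P x a i' i * psi i j c * cnj (psi i' j' c'))"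
    by (simp add: induced_assemblage_def sum_lessThan_2 algebra_simps)
  also have "\<dots> = (\<Sum>i<2. \<Sum>i'<2. \<Sum>j<2. P x a i' i * psi i j c * cnj (psi i' j c'))"
    by (simp add: complete if_distrib[of "\<lambda>u. u * _"] cong: if_cong)
  finally show ?thesis .
qed

lemma induced_assemblage_sum_outcomes_A:
  assumes "proj_meas2 (P x)"
  shows "(\<Sum>a<2. induced_assemblage d psi P Q a b x y c c') =
    (\<Sum>i<2. \<Sum>j<2. \<Sum>j'<2. Q y b j' j * psi i j c * cnj (psi i j' c'))"
proof -
  have complete: "(\<Sum>a<2. P x a i' i) = (if i' = i then 1 else 0)" if "i' < 2" "i < 2" for i' i
    using proj_meas2_sum_outcomes[OF assms that] .
  have "(\<Sum>a<2. induced_assemblage d psi P Q a b x y c c') =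
    (\<Sum>i<2. \<Sum>j<2. \<Sum>j'<2. \<Sum>i'<2. (\<Sum>a<2. P x a i' i) * Q y b j' j * psi i j c * cnj (psi i' j' c'))"
    by (simp add: induced_assemblage_def sum_lessThan_2 algebra_simps)
  also have "\<dots> = (\<Sum>i<2. \<Sum>j<2. \<Sum>j'<2. Q y b j' j * psi i j c * cnj (psi i j' c'))"
    by (simp add: complete if_distrib[of "\<lambda>u. u * _"] cong: if_cong)
  finally show ?thesis .
qed

definition reduced_state :: "(nat \<Rightarrow> nat \<Rightarrow> nat \<Rightarrow> complex) \<Rightarrow> nat \<Rightarrow> nat \<Rightarrow> complex" where
  "reduced_state psi c c' = (\<Sum>i<2. \<Sum>j<2. psi i j c * cnj (psi i j c'))"

lemma induced_assemblage_sum_all_outcomes: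
  assumes "proj_meas2 (P x)" "proj_meas2 (Q y)"
  shows "(\<Sum>a<2. \<Sum>b<2. induced_assemblage d psi P Q a b x y c c') = reduced_state psi c c'"
proof -
  have complete: "(\<Sum>a<2. P x a i' i) = (if i' = i then 1 else 0)" if "i' < 2" "i < 2" for i' i
    using proj_meas2_sum_outcomes[OF assms(1) that] .
  have "(\<Sum>a<2. \<Sum>b<2. induced_assemblage d psi P Q a b x y c c') =
    (\<Sum>i<2. \<Sum>j<2. \<Sum>i'<2. (\<Sum>a<2. P x a i' i) * psi i j c * cnj (psi i' j c'))"
    by (simp add: induced_assemblage_sum_outcomes_B[where Q = Q and y = y, OF assms(2)] sum_lessThan_2 algebra_simps)
  also have "\<dots> = reduced_state psi c c'"
    by (simp add: reduced_state_def complete if_distrib[of "\<lambda>u. u * _"] cong: if_cong)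
  finally show ?thesis .
qed

lemma trace_reduced_state: "pure_state d psi \<Longrightarrow> trace_op d (reduced_state psi) = 1"
proof -
  assume "pure_state d psi"
  have "trace_op d (reduced_state psi) = of_real (\<Sum>c<d. \<Sum>i<2. \<Sum>j<2. (cmod (psi i j c))\<^sup>2)"
    by (simp add: trace_op_def reduced_state_def flip: complex_norm_square)
  also have "\<dots> = 1"
    using \<open>pure_state d psi\<close> by (simp add: pure_state_def sum_lessThan_2 sum.distrib)
  finally show ?thesis .
qed

lemma no_signaling_induced_assemblageI:
  assumes "pure_state d psi" "\<forall>x<2. proj_meas2 (P x)" "\<forall>y<2. proj_meas2 (Q y)"
    and "\<forall>a<2. \<forall>b<2. \<forall>x<2. \<forall>y<2. psd d (induced_assemblage d psi P Q a b x y)"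
  shows "no_signaling d (induced_assemblage d psi P Q)"
  unfolding no_signaling_def
proof (intro conjI exI[of _ "reduced_state psi"])
  show "trace_op d (reduced_state psi) = 1"
    using assms(1) by (rule trace_reduced_state)
  show "\<forall>x<2. \<forall>y<2. \<forall>i<d. \<forall>j<d.
      (\<Sum>a<2. \<Sum>b<2. induced_assemblage d psi P Q a b x y i j) = reduced_state psi i j"
    using assms by (simp add: induced_assemblage_sum_all_outcomes)
qed (use assms in \<open>simp_all add: induced_assemblage_sum_outcomes_A induced_assemblage_sum_outcomes_B\<close>)

lemma LHS_obtain_positive_component:
  assumes "LHS d S"
  obtains n :: nat and q p p' \<rho> k ax bx where "\<forall>l<n. 0 \<le> q l"
    and "\<forall>l<n. cond_prob (p l) \<and> cond_prob (p' l) \<and> density_op d (\<rho> l)"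
    and "\<forall>a<2. \<forall>b<2. \<forall>x<2. \<forall>y<2. \<forall>i<d. \<forall>j<d.
      S a b x y i j = (\<Sum>l<n. of_real (q l * p l a x * p' l b y) * \<rho> l i j)"
    and "k < n" "0 < q k" "\<forall>x<2. ax x < 2 \<and> 0 < p k (ax x) x" "\<forall>y<2. bx y < 2 \<and> 0 < p' k (bx y) y"
proof -
  obtain n :: nat and q p p' \<rho> where q: "\<forall>l<n. 0 \<le> q l" "(\<Sum>l<n. q l) = 1"
    and comps: "\<forall>l<n. cond_prob (p l) \<and> cond_prob (p' l) \<and> density_op d (\<rho> l)"
    and S: "\<forall>a<2. \<forall>b<2. \<forall>x<2. \<forall>y<2. \<forall>i<d. \<forall>j<d.
      S a b x y i j = (\<Sum>l<n. of_real (q l * p l a x * p' l b y) * \<rho> l i j)"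
    using \<open>LHS d S\<close> unfolding LHS_def by blast
  obtain k where k: "k < n" "0 < q k"
    using ex_pos_if_sum_eq_1[OF q(2)] by blast
  have "\<forall>x<2. \<exists>a<2. 0 < p k a x" "\<forall>y<2. \<exists>b<2. 0 < p' k b y"
    using cond_prob_ex_pos comps k(1) by simp_all
  then obtain ax bx where "\<forall>x<2. ax x < 2 \<and> 0 < p k (ax x) x" "\<forall>y<2. bx y < 2 \<and> 0 < p' k (bx y) y"
    by metis
  with q(1) comps S k show ?thesis
    using that by blast
qed

lemma support_vectors_parallel_if_LHS_part:
  fixes S S1 S2 :: assemblage and v :: "nat \<Rightarrow> nat \<Rightarrow> nat \<Rightarrow> nat \<Rightarrow> nat \<Rightarrow> complex"
  assumes "LHS d S1" and psd2: "\<forall>a<2. \<forall>b<2. \<forall>x<2. \<forall>y<2. psd d (S2 a b x y)"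
    and "0 < e" "e \<le> 1"
    and mix: "\<forall>a<2. \<forall>b<2. \<forall>x<2. \<forall>y<2. \<forall>i<d. \<forall>j<d.
      S a b x y i j = of_real e * S1 a b x y i j + of_real (1 - e) * S2 a b x y i j"
    and kernel: "\<forall>a<2. \<forall>b<2. \<forall>x<2. \<forall>y<2. \<forall>w.
      (\<Sum>c<d. cnj (w c) * v a b x y c) = 0 \<longrightarrow> qform d (S a b x y) w = 0"
  shows "\<exists>ax bx t \<chi>. (\<forall>x<2. ax x < 2) \<and> (\<forall>y<2. bx y < 2) \<and>
    (\<forall>x<2. \<forall>y<2. \<forall>c<d. v (ax x) (bx y) x y c = t x y * \<chi> c)"
proof -
  obtain n :: nat and q p p' \<rho> k ax bx where q: "\<forall>l<n. 0 \<le> q l"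
    and comps: "\<forall>l<n. cond_prob (p l) \<and> cond_prob (p' l) \<and> density_op d (\<rho> l)"
    and S1: "\<forall>a<2. \<forall>b<2. \<forall>x<2. \<forall>y<2. \<forall>i<d. \<forall>j<d.
      S1 a b x y i j = (\<Sum>l<n. of_real (q l * p l a x * p' l b y) * \<rho> l i j)"
    and k: "k < n" "0 < q k"
    and ax: "\<forall>x<2. ax x < 2 \<and> 0 < p k (ax x) x" and bx: "\<forall>y<2. bx y < 2 \<and> 0 < p' k (bx y) y"
    by (rule LHS_obtain_positive_component[OF \<open>LHS d S1\<close>])
  obtain c0 where c0: "c0 < d" "\<rho> k c0 c0 \<noteq> 0"
    using density_op_ex_diag_nonzero comps k(1) by blast
  have psd_k: "psd d (\<rho> k)"
    using comps k(1) by (simp add: density_op_def)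
  have "v (ax x) (bx y) x y c = v (ax x) (bx y) x y c0 / \<rho> k c0 c0 * \<rho> k c c0"
    if "x < 2" "y < 2" "c < d" for x y c
  proof -
    define a b where "a = ax x" and "b = bx y"
    have ab: "a < 2" "0 < p k a x" "b < 2" "0 < p' k b y"
      using ax bx that unfolding a_def b_def by auto
    have "qform d (\<rho> k) w = 0" if "(\<Sum>c<d. cnj (w c) * v a b x y c) = 0" for w
    proof (rule qform_psd_mixture_eq_0[where c = "\<lambda>l. q l * p l a x * p' l b y",
          OF _ _ _ \<open>0 < e\<close> \<open>e \<le> 1\<close> _ k(1)])
      show "\<And>i j. i < d \<Longrightarrow> j < d \<Longrightarrow> S a b x y i j =
          of_real e * (\<Sum>l<n. of_real (q l * p l a x * p' l b y) * \<rho> l i j) + of_real (1 - e) * S2 a b x y i j"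
        using mix S1 ab \<open>x < 2\<close> \<open>y < 2\<close> by simp
      show "0 \<le> q l * p l a x * p' l b y \<and> psd d (\<rho> l)" if "l < n" for l
        using q comps that ab \<open>x < 2\<close> \<open>y < 2\<close> by (simp add: cond_prob_def density_op_def)
      show "qform d (S a b x y) w = 0"
        using kernel ab \<open>x < 2\<close> \<open>y < 2\<close> \<open>(\<Sum>c<d. cnj (w c) * v a b x y c) = 0\<close> by simp
      show "psd d (S2 a b x y)"
        using psd2 ab \<open>x < 2\<close> \<open>y < 2\<close> by simp
      show "0 < q k * p k a x * p' k b y"
        using k ab by simp
    qed
    then have "v a b x y c0 * \<rho> k c c0 = v a b x y c * \<rho> k c0 c0"
      using psd_column_parallel[OF psd_k] \<open>c < d\<close> c0(1) by blast
    then show ?thesis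
      using c0(2) unfolding a_def b_def by (simp add: field_simps)
  qed
  then show ?thesis
    using ax bx
    by (intro exI[of _ ax] exI[of _ bx] exI[of _ "\<lambda>x y. v (ax x) (bx y) x y c0 / \<rho> k c0 c0"]
        exI[of _ "\<lambda>c. \<rho> k c c0"]) simp
qed

text \<open>Setting 0 measures in the eigenbasis e_0, e_1 of Z, setting 1 in the eigenbasis (1, 1), (1, -1)
  of X; the latter vectors are left unnormalised, and pauli_norm_sq is their squared norm.\<close>

definition pauli_vec :: "nat \<Rightarrow> nat \<Rightarrow> nat \<Rightarrow> complex" where
  "pauli_vec x a i =
     (if x = 0 then (if i = a then 1 else 0) else if i = 0 \<or> a = 0 then 1 else -1)"

definition pauli_norm_sq :: "nat \<Rightarrow> real" where
  "pauli_norm_sq x = (if x = 0 then 1 else 2)"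

definition pauli_proj :: "nat \<Rightarrow> nat \<Rightarrow> nat \<Rightarrow> nat \<Rightarrow> complex" where
  "pauli_proj x a i j = pauli_vec x a i * pauli_vec x a j / of_real (pauli_norm_sq x)"

definition pauli_branch ::
    "(nat \<Rightarrow> nat \<Rightarrow> nat \<Rightarrow> complex) \<Rightarrow> nat \<Rightarrow> nat \<Rightarrow> nat \<Rightarrow> nat \<Rightarrow> nat \<Rightarrow> complex" where
  "pauli_branch psi a b x y c = (\<Sum>i<2. \<Sum>j<2. pauli_vec x a i * pauli_vec y b j * psi i j c)"

lemma pauli_norm_sq_nonzero [simp]: "pauli_norm_sq x \<noteq> 0"
  by (simp add: pauli_norm_sq_def)

lemma cnj_pauli_vec [simp]: "cnj (pauli_vec x a i) = pauli_vec x a i"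
  by (simp add: pauli_vec_def)

lemma proj_meas2_pauli_proj: "x < 2 \<Longrightarrow> proj_meas2 (pauli_proj x)"
  by (auto simp: proj_meas2_def projector_def pauli_proj_def pauli_vec_def pauli_norm_sq_def
      sum_lessThan_2 all_less_2 less_Suc_eq numeral_2_eq_2)

lemma induced_assemblage_pauli:
  "induced_assemblage d psi pauli_proj pauli_proj a b x y =
     (\<lambda>c c'. pauli_branch psi a b x y c * cnj (pauli_branch psi a b x y c') /
       of_real (pauli_norm_sq x * pauli_norm_sq y))"
  by (intro ext) (simp add: induced_assemblage_def pauli_branch_def pauli_proj_def sum_lessThan_2 field_simps)

lemma psd_induced_assemblage_pauli: "psd d (induced_assemblage d psi pauli_proj pauli_proj a b x y)"
  unfolding induced_assemblage_pauli by (rule psd_rank_one) (simp add: pauli_norm_sq_def)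

lemma no_signaling_induced_assemblage_pauli:
  "pure_state d psi \<Longrightarrow> no_signaling d (induced_assemblage d psi pauli_proj pauli_proj)"
  by (intro no_signaling_induced_assemblageI allI impI)
    (simp_all add: proj_meas2_pauli_proj psd_induced_assemblage_pauli)

lemma pauli_vec_independent:
  "a0 < 2 \<Longrightarrow> a1 < 2 \<Longrightarrow>
    pauli_vec 0 a0 0 * pauli_vec 1 a1 1 - pauli_vec 0 a0 1 * pauli_vec 1 a1 0 \<noteq> 0"
  by (auto simp: pauli_vec_def less_Suc_eq numeral_2_eq_2)

lemma product_if_pauli_branches_parallel:
  assumes ax: "\<forall>x<2. ax x < 2" and bx: "\<forall>y<2. bx y < 2"
    and par: "\<forall>x<2. \<forall>y<2. \<forall>c<d. pauli_branch psi (ax x) (bx y) x y c = t x y * \<chi> c"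
  shows "product_AB_C d psi"
proof -
  have "\<exists>r. \<forall>i<2. \<forall>c<d. (\<Sum>j<2. pauli_vec y (bx y) j * psi i j c) = r i * \<chi> c" if "y < 2" for y
    by (rule rows_parallel_if_independent[OF pauli_vec_independent[of "ax 0" "ax 1"], of d _ "t 0 y" \<chi> "t 1 y"])
      (use ax par that in \<open>auto simp: pauli_branch_def sum_distrib_left mult.assoc\<close>)
  then obtain r where r: "\<forall>y<2. \<forall>i<2. \<forall>c<d. (\<Sum>j<2. pauli_vec y (bx y) j * psi i j c) = r y i * \<chi> c"
    by metis
  have "\<exists>f. \<forall>j<2. \<forall>c<d. psi i j c = f j * \<chi> c" if "i < 2" for i
    by (rule rows_parallel_if_independent[OF pauli_vec_independent[of "bx 0" "bx 1"], of d _ "r 0 i" \<chi> "r 1 i"])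
      (use bx r that in auto)
  then obtain f where "\<forall>i<2. \<forall>j<2. \<forall>c<d. psi i j c = f i j * \<chi> c"
    by metis
  then show ?thesis unfolding product_AB_C_def by blast
qed

theorem theorem2:
  fixes d :: nat and psi :: "nat \<Rightarrow> nat \<Rightarrow> nat \<Rightarrow> complex"
  assumes "0 < d"
    and "pure_state d psi"
    and "entangled_AB_C d psi"
  shows "\<exists>P Q. proj_meas2 (P 0) \<and> proj_meas2 (P 1) \<and> proj_meas2 (Q 0) \<and> proj_meas2 (Q 1) \<and>
           on_edge d (induced_assemblage d psi P Q)"
proof -
  have "proj_meas2 (pauli_proj 0)" "proj_meas2 (pauli_proj 1)"
    by (simp_all add: proj_meas2_pauli_proj)
  moreover have "on_edge d (induced_assemblage d psi pauli_proj pauli_proj)"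
    unfolding on_edge_def
  proof (intro conjI allI impI)
    show "no_signaling d (induced_assemblage d psi pauli_proj pauli_proj)"
      using assms(2) by (rule no_signaling_induced_assemblage_pauli)
    fix \<epsilon> :: real and S1 S2
    assume decomp: "0 \<le> \<epsilon> \<and> \<epsilon> \<le> 1 \<and> LHS d S1 \<and> no_signaling d S2 \<and>
      (\<forall>a<2. \<forall>b<2. \<forall>x<2. \<forall>y<2. \<forall>i<d. \<forall>j<d.
         induced_assemblage d psi pauli_proj pauli_proj a b x y i j =
           of_real \<epsilon> * S1 a b x y i j + of_real (1 - \<epsilon>) * S2 a b x y i j)"
      (is "_ \<and> _ \<and> _ \<and> _ \<and> ?mix")
    then have "\<epsilon> \<le> 1" "LHS d S1" "no_signaling d S2" ?mix
      by simp_all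
    show "\<epsilon> = 0"
    proof (rule ccontr)
      assume "\<epsilon> \<noteq> 0"
      with decomp have "0 < \<epsilon>" by simp
      note psd_S2 = \<open>no_signaling d S2\<close>[unfolded no_signaling_def, THEN conjunct1]
      have kernel: "\<forall>a<2. \<forall>b<2. \<forall>x<2. \<forall>y<2. \<forall>w.
          (\<Sum>c<d. cnj (w c) * pauli_branch psi a b x y c) = 0 \<longrightarrow>
          qform d (induced_assemblage d psi pauli_proj pauli_proj a b x y) w = 0"
        unfolding induced_assemblage_pauli qform_rank_one by simp
      obtain ax bx t \<chi> where "\<forall>x<2. ax x < 2" "\<forall>y<2. bx y < 2"
        "\<forall>x<2. \<forall>y<2. \<forall>c<d. pauli_branch psi (ax x) (bx y) x y c = t x y * \<chi> c"
        using support_vectors_parallel_if_LHS_part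
          [OF \<open>LHS d S1\<close> psd_S2 \<open>0 < \<epsilon>\<close> \<open>\<epsilon> \<le> 1\<close> \<open>?mix\<close> kernel]
        by blast
      then have "product_AB_C d psi"
        by (rule product_if_pauli_branches_parallel)
      with assms(3) show False
        by (simp add: entangled_AB_C_def)
    qed
  qed
  ultimately show ?thesis
    by blast
qed

end
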